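(* Work in Scenario 2 with a common prior, and let $(\mathbf x,\mathbf p)$ be a BNIC mechanism. Then for each bidder $i$, the outside-option utility $V_i(\emptyset;t_i)$ does not depend on $t_i$, and the interim IR constraint $V_i(t_i;t_i)\ge V_i(\emptyset;t_i)$ holds for all $t_i\in T_i$ if and only if it holds for some type of the form $t_i=(\underline v_i,\boldsymbol\eta)$ with $\boldsymbol\eta\in\prod_{j\ne i}[\underline\eta_{j\leftarrow i},\bar\eta_{j\leftarrow i}]$.
   Context: Model: there are $n$ bidders $N=\{1,\dots,n\}$ and a seller of a freely replicable good; an allocation is any $\mathbf x\in[0,1]^n$. Bidder $i$ has value $v_i\in[\underline v_i,\bar v_i]\subset\mathbb R_{\ge0}$ and for $j\ne i$ parameters $\eta_{i\leftarrow j}\in[\underline\eta_{i\leftarrow j},\bar\eta_{i\leftarrow j}]\subset\mathbb R_{\ge0}$; valuation $\nu_i(\mathbf x)=v_ix_i-\sum_{j\ne i}\eta_{i\leftarrow j}x_j$, utility $\nu_i(\mathbf x)-p_i$. In Scenario 2, bidder $i$'s private type is $t_i=(v_i,(\eta_{j\leftarrow i})_{j\ne i})\in T_i=[\underline v_i,\bar v_i]\times\prod_{j\ne i}[\underline\eta_{j\leftarrow i},\bar\eta_{j\leftarrow i}]$. Bids lie in $B_i=T_i\cup\{\emptyset\}$; a mechanism is $\mathbf x:B\to[0,1]^n$, $\mathbf p:B\to\mathbb R^n_{\ge0}$ with $x_i=p_i=0$ when $i$ bids $\emptyset$, specified on profiles with at most one $\emptyset$. Common prior: types $t_i\sim F_i$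 independent across bidders. Interim utility: $V_i(\hat t_i;t_i)=\mathbb E[u_i(\mathbf x(\hat t_i,\mathbf t_{-i}),p_i(\hat t_i,\mathbf t_{-i});\mathbf t)\mid t_i]$ with $\mathbf t_{-i}\sim\prod_{j\ne i}F_j$ (others truthful), for $\hat t_i\in B_i$. BNIC: $V_i(t_i;t_i)\ge V_i(\hat t_i;t_i)$ for all $i$ and $t_i,\hat t_i\in T_i$. Interim IR: $V_i(t_i;t_i)\ge V_i(\emptyset;t_i)$. *)

theory Defs
  imports "HOL-Probability.Probability"
begin

text \<open>A type of bidder i is a pair
  (v, e) with v = v_i and e j = eta_{j<-i} for j different from i; the unused
  entry e i is fixed to 0.  A bid is an option: None is the empty bid.\<close>

type_synonym 'b btype = "real \<times> ('b \<Rightarrow> real)"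

definition Ttypes ::
  "('b \<Rightarrow> real) \<Rightarrow> ('b \<Rightarrow> real) \<Rightarrow> ('b \<Rightarrow> 'b \<Rightarrow> real) \<Rightarrow> ('b \<Rightarrow> 'b \<Rightarrow> real)
   \<Rightarrow> 'b \<Rightarrow> 'b btype set" where
  "Ttypes vlo vhi elo ehi i =
     {(v, e). vlo i \<le> v \<and> v \<le> vhi i \<and> e i = 0 \<and>
              (\<forall>j. j \<noteq> i \<longrightarrow> elo j i \<le> e j \<and> e j \<le> ehi j i)}"

text \<open>elo j i, ehi j i are the bounds of eta_{j<-i}.\<close>

text \<open>Utility of bidder i: nu_i(x) - p_i, with eta_{i<-j} = snd (t j) i.\<close>
definition util :: "('b::finite \<Rightarrow> real) \<Rightarrow> ('b \<Rightarrow> real) \<Rightarrow> ('b \<Rightarrow> 'b btype) \<Rightarrow> 'b \<Rightarrow> real" where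
  "util xv pv t i = fst (t i) * xv i - (\<Sum>j\<in>UNIV - {i}. snd (t j) i * xv j) - pv i"

definition is_mechanism ::
  "(('b \<Rightarrow> 'b btype option) \<Rightarrow> 'b \<Rightarrow> real) \<Rightarrow> (('b \<Rightarrow> 'b btype option) \<Rightarrow> 'b \<Rightarrow> real) \<Rightarrow> bool" where
  "is_mechanism x p \<longleftrightarrow>
     (\<forall>b i. 0 \<le> x b i \<and> x b i \<le> 1 \<and> 0 \<le> p b i \<and>
            (b i = None \<longrightarrow> x b i = 0 \<and> p b i = 0))"

definition interim_integrand ::
  "(('b::finite \<Rightarrow> 'b btype option) \<Rightarrow> 'b \<Rightarrow> real) \<Rightarrow> (('b \<Rightarrow> 'b btype option) \<Rightarrow> 'b \<Rightarrow> real)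
   \<Rightarrow> 'b \<Rightarrow> 'b btype option \<Rightarrow> 'b btype \<Rightarrow> ('b \<Rightarrow> 'b btype) \<Rightarrow> real" where
  "interim_integrand x p i bid ti s =
     util (x ((Some \<circ> s)(i := bid))) (p ((Some \<circ> s)(i := bid))) (s(i := ti)) i"

text \<open>Interim utility V_i(bid; ti): expectation over t_{-i} distributed as the product of the F j.\<close>
definition Vint ::
  "('b::finite \<Rightarrow> 'b btype measure) \<Rightarrow> (('b \<Rightarrow> 'b btype option) \<Rightarrow> 'b \<Rightarrow> real)
   \<Rightarrow> (('b \<Rightarrow> 'b btype option) \<Rightarrow> 'b \<Rightarrow> real) \<Rightarrow> 'b \<Rightarrow> 'b btype option \<Rightarrow> 'b btype \<Rightarrow> real" where
  "Vint F x p i bid ti = (\<integral>s. interim_integrand x p i bid ti s \<partial>(PiM (UNIV - {i}) F))"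

definition BNIC ::
  "('b \<Rightarrow> 'b btype set) \<Rightarrow> ('b::finite \<Rightarrow> 'b btype measure) \<Rightarrow> (('b \<Rightarrow> 'b btype option) \<Rightarrow> 'b \<Rightarrow> real)
   \<Rightarrow> (('b \<Rightarrow> 'b btype option) \<Rightarrow> 'b \<Rightarrow> real) \<Rightarrow> bool" where
  "BNIC T F x p \<longleftrightarrow>
     (\<forall>i ti th. ti \<in> T i \<longrightarrow> th \<in> T i \<longrightarrow> Vint F x p i (Some th) ti \<le> Vint F x p i (Some ti) ti)"

end

theory Submission
  imports Defs
begin

text \<open>Bidding the empty bid gives bidder i no allocation, so its utility is then only the
  externality imposed by the others, which does not involve its own type.  Among truthful
  reports, a bidder of value v can mimic any type of value v' \<le> v and, since its allocation
  is nonnegative, earns at least what that type earns; so BNIC makes truthful interim utility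
  nondecreasing in the value, and interim IR at the lowest value implies it everywhere.\<close>

lemma interim_integrand_eq:
  "interim_integrand x p i bid ti s =
     (let b = (Some \<circ> s)(i := bid)
      in fst ti * x b i - (\<Sum>j\<in>UNIV - {i}. snd (s j) i * x b j) - p b i)"
proof -
  have "(\<Sum>j\<in>UNIV - {i}. snd ((s(i := ti)) j) i * y j) = (\<Sum>j\<in>UNIV - {i}. snd (s j) i * y j)"
    for y :: "_ \<Rightarrow> real"
    by (rule sum.cong) auto
  then show ?thesis
    unfolding interim_integrand_def util_def Let_def by simp
qed

lemma interim_integrand_None_type_indep:
  assumes "is_mechanism x p"
  shows "interim_integrand x p i None ti s = interim_integrand x p i None ti' s"
  using assms unfolding interim_integrand_eq is_mechanism_def Let_def by simp

lemma Vint_None_type_indep: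
  assumes "is_mechanism x p"
  shows "Vint F x p i None ti = Vint F x p i None ti'"
proof -
  have "interim_integrand x p i None ti = interim_integrand x p i None ti'"
    using interim_integrand_None_type_indep[OF assms] by blast
  then show ?thesis
    unfolding Vint_def by simp
qed

lemma interim_integrand_mono_value:
  assumes "is_mechanism x p" and "fst ti \<le> fst ti'"
  shows "interim_integrand x p i bid ti s \<le> interim_integrand x p i bid ti' s"
proof -
  let ?b = "(Some \<circ> s)(i := bid)"
  have "0 \<le> x ?b i"
    using assms(1) unfolding is_mechanism_def by blast
  then have "fst ti * x ?b i \<le> fst ti' * x ?b i"
    using assms(2) by (rule mult_right_mono[rotated])
  then show ?thesis
    unfolding interim_integrand_eq Let_def by simp
qed

lemma Vint_mono_value:
  assumes "is_mechanism x p" and "fst ti \<le> fst ti'"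
    and "integrable (PiM (UNIV - {i}) F) (interim_integrand x p i bid ti)"
    and "integrable (PiM (UNIV - {i}) F) (interim_integrand x p i bid ti')"
  shows "Vint F x p i bid ti \<le> Vint F x p i bid ti'"
  unfolding Vint_def
  using assms(3,4) interim_integrand_mono_value[OF assms(1,2)] by (rule integral_mono)

lemma BNIC_truthful_Vint_mono_value:
  assumes "BNIC T F x p" and "is_mechanism x p"
    and "t \<in> T i" and "t' \<in> T i" and "fst t \<le> fst t'"
    and "integrable (PiM (UNIV - {i}) F) (interim_integrand x p i (Some t) t)"
    and "integrable (PiM (UNIV - {i}) F) (interim_integrand x p i (Some t) t')"
  shows "Vint F x p i (Some t) t \<le> Vint F x p i (Some t') t'"
proof -
  have "Vint F x p i (Some t) t \<le> Vint F x p i (Some t) t'"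
    using assms(2,5,6,7) by (rule Vint_mono_value)
  also have "\<dots> \<le> Vint F x p i (Some t') t'"
    using assms(1,3,4) unfolding BNIC_def by blast
  finally show ?thesis .
qed

lemma Ttypes_value_ge_lower:
  "t \<in> Ttypes vlo vhi elo ehi i \<Longrightarrow> vlo i \<le> fst t"
  unfolding Ttypes_def by auto

lemma Ttypes_lowest_value_nonempty:
  assumes "vlo i \<le> vhi i" and "\<And>j. j \<noteq> i \<Longrightarrow> elo j i \<le> ehi j i"
  shows "(vlo i, \<lambda>j. if j = i then 0 else elo j i) \<in> Ttypes vlo vhi elo ehi i"
  using assms unfolding Ttypes_def by auto

theorem mainTheorem10:
  fixes vlo vhi :: "'b::finite \<Rightarrow> real"
    and elo ehi :: "'b \<Rightarrow> 'b \<Rightarrow> real"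
    and F :: "'b \<Rightarrow> 'b btype measure"
    and x p :: "('b \<Rightarrow> 'b btype option) \<Rightarrow> 'b \<Rightarrow> real"
    and i :: 'b
  assumes bounds_v: "\<And>k. 0 \<le> vlo k \<and> vlo k \<le> vhi k"
    and bounds_eta: "\<And>j k. j \<noteq> k \<Longrightarrow> 0 \<le> elo j k \<and> elo j k \<le> ehi j k"
    and prior: "\<And>k. prob_space (F k)"
    and prior_space: "\<And>k. space (F k) = Ttypes vlo vhi elo ehi k"
    and well_defined: "\<And>k bid tk. bid \<in> Some ` Ttypes vlo vhi elo ehi k \<union> {None} \<Longrightarrow>
        tk \<in> Ttypes vlo vhi elo ehi k \<Longrightarrow>
        integrable (PiM (UNIV - {k}) F) (interim_integrand x p k bid tk)"
    and mech: "is_mechanism x p"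
    and bnic: "BNIC (Ttypes vlo vhi elo ehi) F x p"
  shows "(\<exists>c. \<forall>ti \<in> Ttypes vlo vhi elo ehi i. Vint F x p i None ti = c)
       \<and> ((\<forall>ti \<in> Ttypes vlo vhi elo ehi i. Vint F x p i (Some ti) ti \<ge> Vint F x p i None ti)
          \<longleftrightarrow> (\<exists>eta. (vlo i, eta) \<in> Ttypes vlo vhi elo ehi i \<and>
                  Vint F x p i (Some (vlo i, eta)) (vlo i, eta) \<ge> Vint F x p i None (vlo i, eta)))"
proof -
  let ?T = "Ttypes vlo vhi elo ehi i"
  have IR_from_lowest: "Vint F x p i None ti \<le> Vint F x p i (Some ti) ti"
    if "ti \<in> ?T" and "(vlo i, eta) \<in> ?T"
      and "Vint F x p i None (vlo i, eta) \<le> Vint F x p i (Some (vlo i, eta)) (vlo i, eta)"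
    for ti eta
  proof -
    have "Vint F x p i (Some (vlo i, eta)) (vlo i, eta) \<le> Vint F x p i (Some ti) ti"
      using bnic mech that(2,1) Ttypes_value_ge_lower[OF that(1)] well_defined that(1,2)
      by (intro BNIC_truthful_Vint_mono_value) auto
    then show ?thesis
      using that(3) Vint_None_type_indep[OF mech, of F i ti "(vlo i, eta)"] by linarith
  qed
  moreover have "(vlo i, \<lambda>j. if j = i then 0 else elo j i) \<in> ?T"
    using bounds_v bounds_eta by (intro Ttypes_lowest_value_nonempty) auto
  ultimately show ?thesis
    using Vint_None_type_indep[OF mech] by blast
qed

end
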